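(* Let $k$ be a field of characteristic $p>0$ and $A$ an infinite-dimensional $k$-vector space. For every $r\ge0$, $S_{\le r}A\neq\bigoplus_{0\le i\le r}S^iA$.
   Context: $SA=\bigoplus_{m\ge0}S^mA$ is the symmetric algebra of $A$ ($S^0A=k$, $S^mA$ the $m$-th symmetric power, with pure symmetric tensors $a_1\otimes_s\dots\otimes_s a_m$). The linear map $\partial\colon SA\to SA\otimes A$ is given by $\partial(\lambda)=0$ for $\lambda\in S^0A$ and $\partial(a_1\otimes_s\dots\otimes_s a_m)=\sum_{i=1}^m(a_1\otimes_s\dots\otimes_s a_{i-1}\otimes_s a_{i+1}\otimes_s\dots\otimes_s a_m)\otimes a_i$. Iterates: $\partial^0=1_{SA}$ and $\partial^{r+1}:=\partial;(\partial^r\otimes 1_A)\colon SA\to SA\otimes A^{\otimes(r+1)}$. Define $S_{\le r}A:=\ker(\partial^{r+1})\subseteq SA$. *)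

theory Defs
  imports Main "HOL-Library.Poly_Mapping"
begin

(* Coordinate model: A = span of a basis indexed by the type 'b, i.e. A = ('b \<Rightarrow>\<^sub>0 'k).
   Monomials ('b \<Rightarrow>\<^sub>0 nat) form a basis of SA, so SA = (('b \<Rightarrow>\<^sub>0 nat) \<Rightarrow>\<^sub>0 'k).
   SA \<otimes> A^{\<otimes> n} has basis (monomial, list of n basis indices), so we use
   ((('b \<Rightarrow>\<^sub>0 nat) \<times> 'b list) \<Rightarrow>\<^sub>0 'k). *)

type_synonym ('b, 'k) symalg = "('b \<Rightarrow>\<^sub>0 nat) \<Rightarrow>\<^sub>0 'k"
type_synonym ('b, 'k) symtens = "(('b \<Rightarrow>\<^sub>0 nat) \<times> 'b list) \<Rightarrow>\<^sub>0 'k"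

definition mdeg :: "('b \<Rightarrow>\<^sub>0 nat) \<Rightarrow> nat" where
  "mdeg M = (\<Sum>b\<in>Poly_Mapping.keys M. Poly_Mapping.lookup M b)"

definition Spow :: "nat \<Rightarrow> ('b, 'k::zero) symalg set" where
  "Spow m = {f. \<forall>M\<in>Poly_Mapping.keys f. mdeg M = m}"

definition Sdsum :: "nat \<Rightarrow> ('b, 'k::comm_monoid_add) symalg set" where
  "Sdsum r = {(\<Sum>i\<le>r. g i) | g. \<forall>i\<le>r. g i \<in> Spow i}"

definition tens_right :: "'b \<Rightarrow> ('b, 'k::comm_monoid_add) symtens \<Rightarrow> ('b, 'k) symtens" where
  "tens_right b g = (\<Sum>p\<in>Poly_Mapping.keys g. Poly_Mapping.single (fst p, snd p @ [b]) (Poly_Mapping.lookup g p))"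

definition scal :: "'k::semiring_0 \<Rightarrow> ('a \<Rightarrow>\<^sub>0 'k) \<Rightarrow> ('a \<Rightarrow>\<^sub>0 'k)" where
  "scal c g = Poly_Mapping.map (\<lambda>x. c * x) g"

(* \<partial>^n on a monomial x^M; \<partial>^{n+1} = \<partial>;(\<partial>^n \<otimes> 1), and
   \<partial>(x^M) = \<Sum>_b M(b) x^{M - e_b} \<otimes> b  (the paper's formula, grouping equal factors) *)
fun dmono :: "nat \<Rightarrow> ('b \<Rightarrow>\<^sub>0 nat) \<Rightarrow> ('b, 'k::comm_semiring_1) symtens" where
  "dmono 0 M = Poly_Mapping.single (M, []) 1"
| "dmono (Suc n) M =
     (\<Sum>b\<in>Poly_Mapping.keys M. scal (of_nat (Poly_Mapping.lookup M b)) (tens_right b (dmono n (M - Poly_Mapping.single b 1))))"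

definition dpow :: "nat \<Rightarrow> ('b, 'k::comm_semiring_1) symalg \<Rightarrow> ('b, 'k) symtens" where
  "dpow n f = (\<Sum>M\<in>Poly_Mapping.keys f. scal (Poly_Mapping.lookup f M) (dmono n M))"

definition S_le :: "nat \<Rightarrow> ('b, 'k::comm_semiring_1) symalg set" where
  "S_le r = {f. dpow (Suc r) f = 0}"

end

theory Submission
  imports Defs
begin

text \<open>In characteristic \<open>p\<close>, the derivation \<open>\<partial>\<close> sends the \<open>m\<close>-th power of a basis vector \<open>a\<close>
  to \<open>m\<close> times \<open>a\<^sup>m\<^sup>-\<^sup>1 \<otimes> a\<close>, which vanishes as soon as \<open>p\<close> divides \<open>m\<close>. Hence the power of
  exponent \<open>p(r+1)\<close> lies in \<open>ker \<partial> \<subseteq> S\<^sub>\<le>\<^sub>r A\<close>, although its degree exceeds \<open>r\<close>.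
  Only one basis vector is needed.\<close>

lemma scal_0_left [simp]: "scal (0::'k::semiring_0) g = 0"
  unfolding scal_def by transfer auto

lemma scal_0_right [simp]: "scal c 0 = 0"
  unfolding scal_def by transfer auto

lemma mdeg_single [simp]: "mdeg (Poly_Mapping.single b m) = m"
  by (cases "m = 0") (simp_all add: mdeg_def)

lemma dpow_single: "dpow n (Poly_Mapping.single M c) = scal c (dmono n M)"
  by (cases "c = 0") (simp_all add: dpow_def)

lemma dmono_Suc_single_eq_0:
  assumes "(of_nat m :: 'k::comm_semiring_1) = 0"
  shows "(dmono (Suc n) (Poly_Mapping.single b m) :: ('b, 'k) symtens) = 0"
proof (cases "m = 0")
  case False
  then have "(dmono (Suc n) (Poly_Mapping.single b m) :: ('b, 'k) symtens)
      = scal (of_nat m) (tens_right b (dmono n (Poly_Mapping.single b m - Poly_Mapping.single b 1)))"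
    by simp
  then show ?thesis
    using assms by simp
qed simp

lemma single_power_in_S_le:
  assumes "(of_nat m :: 'k::comm_semiring_1) = 0"
  shows "(Poly_Mapping.single (Poly_Mapping.single b m) c :: ('b, 'k) symalg) \<in> S_le n"
  unfolding S_le_def by (simp add: dpow_single dmono_Suc_single_eq_0 [OF assms] del: dmono.simps)

lemma lookup_Spow_eq_0:
  assumes "f \<in> Spow i" and "mdeg M \<noteq> i"
  shows "Poly_Mapping.lookup f M = 0"
  using assms by (auto simp: Spow_def in_keys_iff)

lemma lookup_Sdsum_eq_0:
  assumes "f \<in> Sdsum r" and "r < mdeg M"
  shows "Poly_Mapping.lookup f M = 0"
proof -
  obtain g where f: "f = (\<Sum>i\<le>r. g i)" and g: "\<forall>i\<le>r. g i \<in> Spow i"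
    using assms(1) unfolding Sdsum_def by blast
  have "Poly_Mapping.lookup f M = (\<Sum>i\<le>r. Poly_Mapping.lookup (g i) M)"
    unfolding f by (simp add: lookup_sum)
  also have "\<dots> = 0"
    using g assms(2) by (intro sum.neutral) (auto intro: lookup_Spow_eq_0)
  finally show ?thesis .
qed

theorem proposition7p9:
  fixes r :: nat
  assumes "CHAR('k::field) > 0"
    and "infinite (UNIV :: 'b set)"
  shows "(S_le r :: ('b, 'k) symalg set) \<noteq> Sdsum r"
proof
  assume eq: "(S_le r :: ('b, 'k) symalg set) = Sdsum r"
  define m where "m = CHAR('k) * Suc r"
  define f :: "('b, 'k) symalg" where "f = Poly_Mapping.single (Poly_Mapping.single undefined m) 1"
  have "(of_nat m :: 'k) = 0"
    by (simp add: m_def of_nat_CHAR)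
  then have "f \<in> Sdsum r"
    unfolding f_def eq [symmetric] by (rule single_power_in_S_le)
  moreover have "r < m"
    using assms(1) unfolding m_def by (metis lessI less_le_trans mult_1 mult_le_mono1 Suc_leI One_nat_def)
  ultimately have "Poly_Mapping.lookup f (Poly_Mapping.single undefined m) = 0"
    by (intro lookup_Sdsum_eq_0) simp_all
  then show False
    by (simp add: f_def)
qed

end
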